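(* Let $\mathbf H$ be the real algebra of quaternions with basis $1,\mathbf i,\mathbf j,\mathbf k$. For any real $a,b,c$, the element $r=a\,\mathbf i\wedge\mathbf j+b\,\mathbf i\wedge\mathbf k+c\,\mathbf j\wedge\mathbf k\in\mathbf H\wedge\mathbf H$ has the property that $[[r,r]]=[r^{12},r^{13}]+[r^{12},r^{23}]+[r^{13},r^{23}]$ commutes with every fully symmetric tensor in $\mathbf H^{\otimes 3}$; hence $\delta(X)=rX-Xr$, $X\in\mathrm{Symm}(\mathbf H\otimes\mathbf H)$, defines (via its dual) a quadratic Poisson bracket on $\mathbf H$ compatible with quaternion multiplication.
   Context: Here $u\wedge v=u\otimes v-v\otimes u$. $\mathbf H\otimes\mathbf H$ and $\mathbf H^{\otimes 3}$ are algebras with componentwise multiplication, and commutators are taken there. For $r=\sum_i\alpha_i\otimes\beta_i$, $r^{12}=\sum_i\alpha_i\otimes\beta_i\otimes1$, $r^{13}=\sum_i\alpha_i\otimes1\otimes\beta_i$, $r^{23}=\sum_i1\otimes\alpha_i\otimes\beta_i$. The bracket defined by $\delta$ is the one whose values on linear functions are given by the dual map $\delta^*\colon\mathbf H^*\wedge\mathbf H^*\to\mathrm{Sym}^2(\mathbf H^* )$ (identifying symmetric tensors $\mathrm{Symm}(\mathbf H\otimes\mathbf H)$ with $(\mathrm{Sym}^2\mathbf H^* )^*$ and $\mathbf H\wedge\mathbf H$ with $(\mathbf H^*\wedge\mathbf H^* )^*$), extended by the Leibniz rule. Compatibility means the multiplication map $\mathbf H\times\mathbf H\to\mathbf H$ is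 a Poisson map for the product Poisson structure. *)

theory Defs
  imports "HOL-Analysis.Analysis"
begin

text \<open>Basis 1, i, j, k of the quaternions H. Elements of H are coefficient
 functions qb => real; tensors in H (x) H and H (x) H (x) H are coefficient
 functions of two resp. three basis indices.\<close>

datatype qb = E1 | Ei | Ej | Ek

lemma UNIV_qb: "(UNIV :: qb set) = {E1, Ei, Ej, Ek}"
  using qb.exhaust by auto

instance qb :: finite
  by standard (simp add: UNIV_qb)

type_synonym quat = "qb \<Rightarrow> real"
type_synonym tens2 = "qb \<Rightarrow> qb \<Rightarrow> real"
type_synonym tens3 = "qb \<Rightarrow> qb \<Rightarrow> qb \<Rightarrow> real"

text \<open>Product of basis elements: (sign, basis element).\<close>
fun qbmul :: "qb \<Rightarrow> qb \<Rightarrow> real \<times> qb" where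
  "qbmul E1 y = (1, y)"
| "qbmul x E1 = (1, x)"
| "qbmul Ei Ei = (-1, E1)"
| "qbmul Ej Ej = (-1, E1)"
| "qbmul Ek Ek = (-1, E1)"
| "qbmul Ei Ej = (1, Ek)"
| "qbmul Ej Ei = (-1, Ek)"
| "qbmul Ej Ek = (1, Ei)"
| "qbmul Ek Ej = (-1, Ei)"
| "qbmul Ek Ei = (1, Ej)"
| "qbmul Ei Ek = (-1, Ej)"

definition qc :: "qb \<Rightarrow> qb \<Rightarrow> qb \<Rightarrow> real" where
  "qc a b c = (if snd (qbmul a b) = c then fst (qbmul a b) else 0)"

definition qmul :: "quat \<Rightarrow> quat \<Rightarrow> quat" where
  "qmul u v = (\<lambda>k. \<Sum>a\<in>UNIV. \<Sum>b\<in>UNIV. u a * v b * qc a b k)"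

definition tmul2 :: "tens2 \<Rightarrow> tens2 \<Rightarrow> tens2" where
  "tmul2 X Y = (\<lambda>p q. \<Sum>a\<in>UNIV. \<Sum>b\<in>UNIV. \<Sum>c\<in>UNIV. \<Sum>d\<in>UNIV.
      X a b * Y c d * qc a c p * qc b d q)"

definition tmul3 :: "tens3 \<Rightarrow> tens3 \<Rightarrow> tens3" where
  "tmul3 X Y = (\<lambda>p q s. \<Sum>a\<in>UNIV. \<Sum>b\<in>UNIV. \<Sum>c\<in>UNIV. \<Sum>d\<in>UNIV. \<Sum>e\<in>UNIV. \<Sum>f\<in>UNIV.
      X a b c * Y d e f * qc a d p * qc b e q * qc c f s)"

definition comm3 :: "tens3 \<Rightarrow> tens3 \<Rightarrow> tens3" where
  "comm3 X Y = (\<lambda>p q s. tmul3 X Y p q s - tmul3 Y X p q s)"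

definition bas :: "qb \<Rightarrow> quat" where
  "bas a = (\<lambda>m. if m = a then 1 else 0)"

definition tens :: "quat \<Rightarrow> quat \<Rightarrow> tens2" where
  "tens u v = (\<lambda>p q. u p * v q)"

definition wedge :: "quat \<Rightarrow> quat \<Rightarrow> tens2" where
  "wedge u v = (\<lambda>p q. tens u v p q - tens v u p q)"

definition rmat :: "real \<Rightarrow> real \<Rightarrow> real \<Rightarrow> tens2" where
  "rmat a b c = (\<lambda>p q. a * wedge (bas Ei) (bas Ej) p q + b * wedge (bas Ei) (bas Ek) p q
                     + c * wedge (bas Ej) (bas Ek) p q)"

definition r12 :: "tens2 \<Rightarrow> tens3" where
  "r12 r = (\<lambda>x y z. r x y * bas E1 z)"
definition r13 :: "tens2 \<Rightarrow> tens3" where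
  "r13 r = (\<lambda>x y z. r x z * bas E1 y)"
definition r23 :: "tens2 \<Rightarrow> tens3" where
  "r23 r = (\<lambda>x y z. bas E1 x * r y z)"

definition cybe :: "tens2 \<Rightarrow> tens3" where
  "cybe r = (\<lambda>p q s. comm3 (r12 r) (r13 r) p q s + comm3 (r12 r) (r23 r) p q s
                   + comm3 (r13 r) (r23 r) p q s)"

definition fully_symmetric :: "tens3 \<Rightarrow> bool" where
  "fully_symmetric S \<longleftrightarrow> (\<forall>x y z. S x y z = S y x z \<and> S x y z = S x z y)"

definition delta :: "tens2 \<Rightarrow> tens2 \<Rightarrow> tens2" where
  "delta r X = (\<lambda>p q. tmul2 r X p q - tmul2 X r p q)"

text \<open>The bracket of the coordinate functions x_p, x_q (dual basis), as a
 quadratic function on H: the quadratic form delta^*(x_p /\ x_q) in Sym^2(H^*)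
 evaluated at x is its pairing with the symmetric tensor x (x) x, i.e.
 the pairing of x_p /\ x_q = x_p (x) x_q - x_q (x) x_p with delta(x (x) x).\<close>
definition pbr :: "tens2 \<Rightarrow> qb \<Rightarrow> qb \<Rightarrow> quat \<Rightarrow> real" where
  "pbr r p q x = delta r (tens x x) p q - delta r (tens x x) q p"

definition pd :: "(quat \<Rightarrow> real) \<Rightarrow> quat \<Rightarrow> qb \<Rightarrow> real" where
  "pd f x l = deriv (\<lambda>t::real. f (\<lambda>m. x m + t * bas l m)) 0"

text \<open>The bracket determined by the values pi on coordinate functions,
 extended by the Leibniz rule.\<close>
definition bracket :: "(qb \<Rightarrow> qb \<Rightarrow> quat \<Rightarrow> real) \<Rightarrow> (quat \<Rightarrow> real) \<Rightarrow> (quat \<Rightarrow> real) \<Rightarrow> quat \<Rightarrow> real" where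
  "bracket P f g x = (\<Sum>p\<in>UNIV. \<Sum>q\<in>UNIV. P p q x * pd f x p * pd g x q)"

definition coord :: "qb \<Rightarrow> quat \<Rightarrow> real" where
  "coord p = (\<lambda>x. x p)"

definition prod_bracket :: "(qb \<Rightarrow> qb \<Rightarrow> quat \<Rightarrow> real) \<Rightarrow> (quat \<Rightarrow> quat \<Rightarrow> real)
    \<Rightarrow> (quat \<Rightarrow> quat \<Rightarrow> real) \<Rightarrow> quat \<Rightarrow> quat \<Rightarrow> real" where
  "prod_bracket P F G u v =
     (\<Sum>a\<in>UNIV. \<Sum>b\<in>UNIV. P a b u * pd (\<lambda>u'. F u' v) u a * pd (\<lambda>u'. G u' v) u b)
   + (\<Sum>a\<in>UNIV. \<Sum>b\<in>UNIV. P a b v * pd (\<lambda>v'. F u v') v a * pd (\<lambda>v'. G u v') v b)"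

text \<open>Poisson structure (skew-symmetry and Jacobi identity, checked on the
 generating coordinate functions).\<close>
definition is_poisson :: "(qb \<Rightarrow> qb \<Rightarrow> quat \<Rightarrow> real) \<Rightarrow> bool" where
  "is_poisson P \<longleftrightarrow>
     (\<forall>p q x. P p q x = - P q p x) \<and>
     (\<forall>p q s x. bracket P (coord p) (bracket P (coord q) (coord s)) x
              + bracket P (coord q) (bracket P (coord s) (coord p)) x
              + bracket P (coord s) (bracket P (coord p) (coord q)) x = 0)"

text \<open>Multiplication H x H -> H is a Poisson map.\<close>
definition mult_compatible :: "(qb \<Rightarrow> qb \<Rightarrow> quat \<Rightarrow> real) \<Rightarrow> bool" where
  "mult_compatible P \<longleftrightarrow>
     (\<forall>p q u v. prod_bracket P (\<lambda>u v. coord p (qmul u v)) (\<lambda>u v. coord q (qmul u v)) u v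
               = P p q (qmul u v))"

end

theory Submission
  imports Defs
begin

text \<open>Everything reduces to finite computations in the basis 1, i, j, k. A product of two
 basis elements is plus or minus a basis element, so every sum against the structure constants
 collapses to a single term. In this way [[r,r]] turns out to be 2(a^2+b^2+c^2) times the
 alternating tensor on i, j, k, which commutes with every fully symmetric tensor. The bracket of
 two coordinate functions is an explicit quadratic form, whose derivatives are therefore
 polarisations of it; this turns the Jacobi identity and the Poisson-map property into
 polynomial identities.\<close>

lemma sum_UNIV_qb: "(\<Sum>x\<in>UNIV. f x) = f E1 + f Ei + f Ej + f Ek"
  by (simp add: UNIV_qb add.assoc)

text \<open>The index part of qbmul is the Klein four-group law, in which every element is its own
 inverse; hence e_a e_(qb_ldiv a s) is e_s up to sign.\<close>

definition qb_ldiv :: "qb \<Rightarrow> qb \<Rightarrow> qb" where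
  "qb_ldiv a s = snd (qbmul a s)"

definition qb_ldiv_sign :: "qb \<Rightarrow> qb \<Rightarrow> real" where
  "qb_ldiv_sign a s = qc a (qb_ldiv a s) s"

lemma sum_qc_collapse:
  "(\<Sum>d\<in>UNIV. qc a d s * h d) = qb_ldiv_sign a s * h (qb_ldiv a s)"
  by (cases a; cases s; simp add: sum_UNIV_qb qc_def qb_ldiv_sign_def qb_ldiv_def)

lemma tmul2_collapse:
  "tmul2 X Y p q = (\<Sum>a\<in>UNIV. \<Sum>b\<in>UNIV.
     X a b * qb_ldiv_sign a p * qb_ldiv_sign b q * Y (qb_ldiv a p) (qb_ldiv b q))"
proof -
  have "(\<Sum>c\<in>UNIV. \<Sum>d\<in>UNIV. X a b * Y c d * qc a c p * qc b d q)
      = X a b * qb_ldiv_sign a p * qb_ldiv_sign b q * Y (qb_ldiv a p) (qb_ldiv b q)" for a b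
  proof -
    have "(\<Sum>c\<in>UNIV. \<Sum>d\<in>UNIV. X a b * Y c d * qc a c p * qc b d q)
        = (\<Sum>c\<in>UNIV. qc a c p * (\<Sum>d\<in>UNIV. qc b d q * (X a b * Y c d)))"
      by (simp add: sum_distrib_left mult_ac)
    also have "\<dots> = qb_ldiv_sign a p * (qb_ldiv_sign b q * (X a b * Y (qb_ldiv a p) (qb_ldiv b q)))"
      by (simp only: sum_qc_collapse)
    finally show ?thesis by (simp add: mult_ac)
  qed
  then show ?thesis unfolding tmul2_def by simp
qed

lemma tmul3_collapse:
  "tmul3 X Y p q s = (\<Sum>a\<in>UNIV. \<Sum>b\<in>UNIV. \<Sum>c\<in>UNIV.
     X a b c * qb_ldiv_sign a p * qb_ldiv_sign b q * qb_ldiv_sign c s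
       * Y (qb_ldiv a p) (qb_ldiv b q) (qb_ldiv c s))"
proof -
  have "(\<Sum>d\<in>UNIV. \<Sum>e\<in>UNIV. \<Sum>f\<in>UNIV. X a b c * Y d e f * qc a d p * qc b e q * qc c f s)
      = X a b c * qb_ldiv_sign a p * qb_ldiv_sign b q * qb_ldiv_sign c s
          * Y (qb_ldiv a p) (qb_ldiv b q) (qb_ldiv c s)" for a b c
  proof -
    have "(\<Sum>d\<in>UNIV. \<Sum>e\<in>UNIV. \<Sum>f\<in>UNIV. X a b c * Y d e f * qc a d p * qc b e q * qc c f s)
        = (\<Sum>d\<in>UNIV. qc a d p * (\<Sum>e\<in>UNIV. qc b e q * (\<Sum>f\<in>UNIV. qc c f s * (X a b c * Y d e f))))"
      by (simp add: sum_distrib_left mult_ac)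
    also have "\<dots> = qb_ldiv_sign a p * (qb_ldiv_sign b q * (qb_ldiv_sign c s
                      * (X a b c * Y (qb_ldiv a p) (qb_ldiv b q) (qb_ldiv c s))))"
      by (simp only: sum_qc_collapse)
    finally show ?thesis by (simp add: mult_ac)
  qed
  then show ?thesis unfolding tmul3_def by simp
qed

lemma rmat_simps:
  "rmat a b c E1 q = 0" "rmat a b c p E1 = 0"
  "rmat a b c Ei Ei = 0" "rmat a b c Ej Ej = 0" "rmat a b c Ek Ek = 0"
  "rmat a b c Ei Ej = a" "rmat a b c Ei Ek = b" "rmat a b c Ej Ek = c"
  "rmat a b c Ej Ei = - a" "rmat a b c Ek Ei = - b" "rmat a b c Ek Ej = - c"
  by (simp_all add: rmat_def wedge_def tens_def bas_def)

fun levi_civita :: "qb \<Rightarrow> qb \<Rightarrow> qb \<Rightarrow> real" where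
  "levi_civita Ei Ej Ek = 1" | "levi_civita Ej Ek Ei = 1" | "levi_civita Ek Ei Ej = 1"
| "levi_civita Ei Ek Ej = -1" | "levi_civita Ek Ej Ei = -1" | "levi_civita Ej Ei Ek = -1"
| "levi_civita x y z = 0"

lemma cybe_rmat: "cybe (rmat a b c) = (\<lambda>p q s. 2 * (a\<^sup>2 + b\<^sup>2 + c\<^sup>2) * levi_civita p q s)"
proof (intro ext)
  fix p q s
  show "cybe (rmat a b c) p q s = 2 * (a\<^sup>2 + b\<^sup>2 + c\<^sup>2) * levi_civita p q s"
    by (cases p; cases q; cases s;
        simp add: cybe_def comm3_def tmul3_collapse sum_UNIV_qb r12_def r13_def r23_def
          rmat_simps bas_def qb_ldiv_sign_def qb_ldiv_def qc_def;
        simp add: algebra_simps power2_eq_square)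
qed

text \<open>Oriented by qb_rank, the symmetries of S become terminating rewrite rules that sort the
 arguments of S.\<close>

fun qb_rank :: "qb \<Rightarrow> nat" where
  "qb_rank E1 = 0" | "qb_rank Ei = 1" | "qb_rank Ej = 2" | "qb_rank Ek = 3"

lemma fully_symmetric_swap12: "fully_symmetric S \<Longrightarrow> qb_rank y < qb_rank x \<Longrightarrow> S x y z = S y x z"
  unfolding fully_symmetric_def by blast

lemma fully_symmetric_swap23: "fully_symmetric S \<Longrightarrow> qb_rank z < qb_rank y \<Longrightarrow> S x y z = S x z y"
  unfolding fully_symmetric_def by blast

lemma comm3_levi_civita_fully_symmetric:
  assumes "fully_symmetric S"
  shows "comm3 (\<lambda>p q s. K * levi_civita p q s) S = (\<lambda>p q s. 0)"
proof (intro ext)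
  fix p q s
  note sort_args = fully_symmetric_swap12[OF assms] fully_symmetric_swap23[OF assms]
  show "comm3 (\<lambda>p q s. K * levi_civita p q s) S p q s = 0"
    by (cases p; cases q; cases s;
        simp add: comm3_def tmul3_collapse sum_UNIV_qb qb_ldiv_sign_def qb_ldiv_def qc_def sort_args;
        simp add: algebra_simps)
qed

fun rbracket_upper :: "real \<Rightarrow> real \<Rightarrow> real \<Rightarrow> qb \<Rightarrow> qb \<Rightarrow> quat \<Rightarrow> real" where
  "rbracket_upper a b c E1 Ei x = 4 * (c * ((x Ej)\<^sup>2 + (x Ek)\<^sup>2) + b * x Ei * x Ej - a * x Ei * x Ek)"
| "rbracket_upper a b c E1 Ej x = - 4 * (b * ((x Ei)\<^sup>2 + (x Ek)\<^sup>2) + c * x Ei * x Ej + a * x Ej * x Ek)"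
| "rbracket_upper a b c E1 Ek x = 4 * (a * ((x Ei)\<^sup>2 + (x Ej)\<^sup>2) + b * x Ej * x Ek - c * x Ei * x Ek)"
| "rbracket_upper a b c Ei Ej x = 4 * x E1 * (b * x Ei + c * x Ej)"
| "rbracket_upper a b c Ei Ek x = 4 * x E1 * (c * x Ek - a * x Ei)"
| "rbracket_upper a b c Ej Ek x = - 4 * x E1 * (a * x Ej + b * x Ek)"
| "rbracket_upper a b c p q x = 0"

definition rbracket :: "real \<Rightarrow> real \<Rightarrow> real \<Rightarrow> qb \<Rightarrow> qb \<Rightarrow> quat \<Rightarrow> real" where
  "rbracket a b c p q x = rbracket_upper a b c p q x - rbracket_upper a b c q p x"

lemma rbracket_skew: "rbracket a b c p q x = - rbracket a b c q p x"
  by (simp add: rbracket_def)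

lemma pbr_rmat: "pbr (rmat a b c) = rbracket a b c"
proof (intro ext)
  fix p q x
  show "pbr (rmat a b c) p q x = rbracket a b c p q x"
    by (cases p; cases q;
        simp add: pbr_def delta_def tmul2_collapse sum_UNIV_qb rmat_simps tens_def bas_def
          qb_ldiv_sign_def qb_ldiv_def qc_def rbracket_def;
        simp add: algebra_simps power2_eq_square)
qed

lemma pd_quadratic:
  assumes "\<And>t. f (\<lambda>m. x m + t * bas l m) = \<alpha> + \<beta> * t + \<gamma> * t\<^sup>2"
  shows "pd f x l = \<beta>"
proof -
  have "((\<lambda>t::real. \<alpha> + \<beta> * t + \<gamma> * t\<^sup>2) has_real_derivative \<beta>) (at 0)"
    by (auto intro!: derivative_eq_intros)
  then show ?thesis
    unfolding pd_def assms by (rule DERIV_imp_deriv)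
qed

lemma pd_coord: "pd (coord p) x l = bas l p"
  by (rule pd_quadratic[where \<gamma> = 0]) (simp add: coord_def)

lemma rbracket_along_line:
  "rbracket a b c p q (\<lambda>m. x m + t * y m) = rbracket a b c p q x
     + (rbracket a b c p q (\<lambda>m. x m + y m) - rbracket a b c p q x - rbracket a b c p q y) * t
     + rbracket a b c p q y * t\<^sup>2"
  by (cases p; cases q; simp add: rbracket_def algebra_simps power2_eq_square)

lemma pd_rbracket:
  "pd (rbracket a b c p q) x l
     = rbracket a b c p q (\<lambda>m. x m + bas l m) - rbracket a b c p q x - rbracket a b c p q (bas l)"
  by (rule pd_quadratic, rule rbracket_along_line)

lemma qmul_along_line_left: "qmul (\<lambda>m. u m + t * w m) v p = qmul u v p + qmul w v p * t"
  by (simp add: qmul_def sum_UNIV_qb algebra_simps)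

lemma qmul_along_line_right: "qmul u (\<lambda>m. v m + t * w m) p = qmul u v p + qmul u w p * t"
  by (simp add: qmul_def sum_UNIV_qb algebra_simps)

lemma pd_coord_qmul_left: "pd (\<lambda>u'. coord p (qmul u' v)) u l = qmul (bas l) v p"
  by (rule pd_quadratic[where \<gamma> = 0]) (simp add: coord_def qmul_along_line_left)

lemma pd_coord_qmul_right: "pd (\<lambda>v'. coord p (qmul u v')) v l = qmul u (bas l) p"
  by (rule pd_quadratic[where \<gamma> = 0]) (simp add: coord_def qmul_along_line_right)

lemma bracket_coord_left: "bracket P (coord p) g x = (\<Sum>l\<in>UNIV. P p l x * pd g x l)"
  by (cases p; simp add: bracket_def pd_coord bas_def sum_UNIV_qb)

lemma bracket_coord_coord: "bracket P (coord p) (coord q) = P p q"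
  by (cases q; simp add: fun_eq_iff bracket_coord_left pd_coord bas_def sum_UNIV_qb)

lemma prod_bracket_coord_qmul:
  "prod_bracket P (\<lambda>u v. coord p (qmul u v)) (\<lambda>u v. coord q (qmul u v)) u v
     = (\<Sum>l\<in>UNIV. \<Sum>n\<in>UNIV. P l n u * qmul (bas l) v p * qmul (bas n) v q)
     + (\<Sum>l\<in>UNIV. \<Sum>n\<in>UNIV. P l n v * qmul u (bas l) p * qmul u (bas n) q)"
  by (simp add: prod_bracket_def pd_coord_qmul_left pd_coord_qmul_right)

lemma rbracket_jacobi:
  "bracket (rbracket a b c) (coord p) (bracket (rbracket a b c) (coord q) (coord s)) x
   + bracket (rbracket a b c) (coord q) (bracket (rbracket a b c) (coord s) (coord p)) x
   + bracket (rbracket a b c) (coord s) (bracket (rbracket a b c) (coord p) (coord q)) x = 0"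
  unfolding bracket_coord_coord bracket_coord_left pd_rbracket
  by (cases p; cases q; cases s; simp add: sum_UNIV_qb bas_def rbracket_def;
      simp add: algebra_simps power2_eq_square)

lemma rbracket_mult_compatible:
  "prod_bracket (rbracket a b c) (\<lambda>u v. coord p (qmul u v)) (\<lambda>u v. coord q (qmul u v)) u v
     = rbracket a b c p q (qmul u v)"
  unfolding prod_bracket_coord_qmul
  by (cases p; cases q; simp add: sum_UNIV_qb qmul_def bas_def qc_def rbracket_def;
      simp add: algebra_simps power2_eq_square)

theorem mainTheorem9:
  fixes a b c :: real
  shows "(\<forall>S. fully_symmetric S \<longrightarrow> comm3 (cybe (rmat a b c)) S = (\<lambda>p q s. 0))
         \<and> is_poisson (pbr (rmat a b c))
         \<and> mult_compatible (pbr (rmat a b c))"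
proof (intro conjI)
  show "\<forall>S. fully_symmetric S \<longrightarrow> comm3 (cybe (rmat a b c)) S = (\<lambda>p q s. 0)"
    by (simp add: cybe_rmat comm3_levi_civita_fully_symmetric)
  show "is_poisson (pbr (rmat a b c))"
    unfolding pbr_rmat is_poisson_def using rbracket_skew rbracket_jacobi by blast
  show "mult_compatible (pbr (rmat a b c))"
    unfolding pbr_rmat mult_compatible_def using rbracket_mult_compatible by blast
qed

end
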